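(* Let $b>0$, $\beta>0$, $\nu>0$, $\delta>0$, $\alpha>0$ and $p\in(0,1)$, and consider the system \[ S'=b(1-S-pI)-(\beta-\delta)SI+\alpha R,\qquad I'=\big(\beta S-((1-p)b+\nu+\delta)+\delta I\big)I,\qquad R'=\nu I-(b+\alpha-\delta I)R \] on the region $\mathcal{D}^{\mathrm{fra}}=\{(S,I,R): S\ge 0, I\ge 0, R\ge 0, S+I+R=1\}$. Let $\gamma=(1-p)b+\nu+\delta$ and $R_0=\beta/\gamma$. Then the disease-free equilibrium $E_0=(1,0,0)$ is globally asymptotically stable in $\mathcal{D}^{\mathrm{fra}}$ if and only if $R_0\le 1$, and $E_0$ is unstable when $R_0>1$.
   Context: The variables $S,I,R$ are the fractions of susceptible, infectious and recovered individuals in an SIRS model with vertical transmission (fraction $p$ of newborns of infectives infected), birth rate $b$, transmission rate $\beta$, recovery rate $\nu$, disease-induced death rate $\delta$, and rate $\alpha$ of loss of immunity. Globally asymptotically stable (GAS) in a region means Lyapunov stable and attracting every solution starting in that region. *)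

theory Defs
  imports "HOL-Analysis.Analysis"
begin

definition sirs_field ::
  "real \<Rightarrow> real \<Rightarrow> real \<Rightarrow> real \<Rightarrow> real \<Rightarrow> real \<Rightarrow> real \<times> real \<times> real \<Rightarrow> real \<times> real \<times> real" where
  "sirs_field b beta nu delta alpha p x =
     (case x of (S, I, R) \<Rightarrow>
       (b * (1 - S - p * I) - (beta - delta) * S * I + alpha * R,
        (beta * S - ((1 - p) * b + nu + delta) + delta * I) * I,
        nu * I - (b + alpha - delta * I) * R))"

definition D_fra :: "(real \<times> real \<times> real) set" where
  "D_fra = {(S, I, R). S \<ge> 0 \<and> I \<ge> 0 \<and> R \<ge> 0 \<and> S + I + R = 1}"

definition is_solution ::
  "(('a::real_normed_vector) \<Rightarrow> 'a) \<Rightarrow> (real \<Rightarrow> 'a) \<Rightarrow> bool" where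
  "is_solution F x \<longleftrightarrow>
     (\<forall>t\<ge>0. (x has_vector_derivative F (x t)) (at t within {0..}))"

definition lyapunov_stable_in ::
  "(('a::real_normed_vector) \<Rightarrow> 'a) \<Rightarrow> 'a set \<Rightarrow> 'a \<Rightarrow> bool" where
  "lyapunov_stable_in F D e \<longleftrightarrow>
     (\<forall>\<epsilon>>0. \<exists>\<eta>>0. \<forall>x. is_solution F x \<and> x 0 \<in> D \<and> dist (x 0) e < \<eta> \<longrightarrow>
        (\<forall>t\<ge>0. dist (x t) e < \<epsilon>))"

definition attracting_in ::
  "(('a::real_normed_vector) \<Rightarrow> 'a) \<Rightarrow> 'a set \<Rightarrow> 'a \<Rightarrow> bool" where
  "attracting_in F D e \<longleftrightarrow>
     (\<forall>x. is_solution F x \<and> x 0 \<in> D \<longrightarrow> (x \<longlongrightarrow> e) at_top)"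

definition GAS_in ::
  "(('a::real_normed_vector) \<Rightarrow> 'a) \<Rightarrow> 'a set \<Rightarrow> 'a \<Rightarrow> bool" where
  "GAS_in F D e \<longleftrightarrow> lyapunov_stable_in F D e \<and> attracting_in F D e"

end

theory Submission
  imports Defs
begin

text \<open>
  Solutions starting in the simplex \<open>D_fra\<close> stay there, and along them
  \<open>I' = (\<beta> S - \<gamma> + \<delta> I) I\<close> with \<open>\<gamma> = (1 - p) b + \<nu> + \<delta>\<close>.

  If \<open>\<beta> \<le> \<gamma>\<close>, then \<open>\<beta> S \<le> \<gamma> (1 - I)\<close> on the simplex, whence
  \<open>I' \<le> -((1 - p) b + \<nu>) I\<^sup>2\<close>: \<open>I\<close> decreases to \<open>0\<close>. Once \<open>\<delta> I \<le> (b + \<alpha>)/2\<close>,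
  \<open>R\<close> is fed by \<open>\<nu> I\<close> and decays at rate \<open>(b + \<alpha>)/2\<close>, so it follows \<open>I\<close> to \<open>0\<close>;
  the same comparison bounds \<open>I + R\<close> by a multiple of \<open>I(0) + R(0)\<close>, which is stability.

  If \<open>\<beta> > \<gamma>\<close>, then near \<open>E\<^sub>0\<close> the factor \<open>\<beta> S - \<gamma> + \<delta> I\<close> exceeds \<open>(\<beta> - \<gamma>)/2\<close>,
  so \<open>I\<close> grows exponentially and every solution with \<open>I(0) > 0\<close> leaves a fixed
  neighbourhood of \<open>E\<^sub>0\<close>. For this, solutions must exist: they come from Picard
  iteration for the field clamped to a box around the simplex, which is globally
  Lipschitz and bounded and coincides with the original field near the simplex.
\<close>

section \<open>Sign and comparison lemmas\<close>

lemma last_zero_before_negative: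
  fixes u :: "real \<Rightarrow> real"
  assumes cont: "continuous_on {a..b} u" and "a \<le> b" "0 \<le> u a" "u b < 0"
  obtains t0 where "a \<le> t0" "t0 < b" "u t0 = 0" "\<And>s. t0 < s \<Longrightarrow> s \<le> b \<Longrightarrow> u s < 0"
proof -
  define Z where "Z = {a..b} \<inter> u -` {0..}"
  have "closed Z" unfolding Z_def by (rule continuous_closed_preimage[OF cont]) auto
  moreover have "a \<in> Z" "bdd_above Z" using assms \<open>a \<le> b\<close> unfolding Z_def by auto
  ultimately have "Sup Z \<in> Z" by (auto intro: closed_contains_Sup)
  define t0 where "t0 = Sup Z"
  have t0: "a \<le> t0" "t0 \<le> b" "0 \<le> u t0" using \<open>Sup Z \<in> Z\<close> unfolding Z_def t0_def by auto
  have neg_after: "u s < 0" if "t0 < s" "s \<le> b" for s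
  proof (rule ccontr)
    assume "\<not> u s < 0"
    hence "s \<in> Z" unfolding Z_def using that t0 by auto
    thus False using cSup_upper[OF _ \<open>bdd_above Z\<close>] that unfolding t0_def by fastforce
  qed
  obtain s where s: "t0 \<le> s" "s \<le> b" "u s = 0"
    using IVT2'[of u b 0 t0] continuous_on_subset[OF cont] t0 \<open>u b < 0\<close> by fastforce
  hence "s = t0" using neg_after[of s] by force
  show ?thesis using that[of t0] t0 s \<open>s = t0\<close> neg_after \<open>u b < 0\<close> by (cases "t0 = b") auto
qed

lemma nonneg_if_linear_lower_bound_after_zeros:
  fixes u u' :: "real \<Rightarrow> real"
  assumes cont: "continuous_on {0..<T} u"
    and deriv: "\<And>t. 0 < t \<Longrightarrow> t < T \<Longrightarrow> (u has_real_derivative u' t) (at t)"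
    and init: "0 \<le> u 0"
    and after_zeros: "\<And>t0. 0 \<le> t0 \<Longrightarrow> t0 < T \<Longrightarrow> u t0 = 0 \<Longrightarrow>
      \<exists>d>0. \<exists>K. \<forall>t. t0 < t \<and> t < t0 + d \<and> t < T \<and> u t < 0 \<longrightarrow> K * u t \<le> u' t"
    and t1: "0 \<le> t1" "t1 < T"
  shows "0 \<le> u t1"
proof (rule ccontr)
  assume "\<not> 0 \<le> u t1"
  have cont1: "continuous_on {0..t1} u" using t1 by (auto intro: continuous_on_subset[OF cont])
  then obtain t0 where t0: "0 \<le> t0" "t0 < t1" "u t0 = 0" and neg_after: "\<And>s. t0 < s \<Longrightarrow> s \<le> t1 \<Longrightarrow> u s < 0"
    using last_zero_before_negative[OF cont1 t1(1) init] \<open>\<not> 0 \<le> u t1\<close> by (metis not_le)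
  then obtain d K where "d > 0"
    and K: "\<And>t. t0 < t \<Longrightarrow> t < t0 + d \<Longrightarrow> t < T \<Longrightarrow> u t < 0 \<Longrightarrow> K * u t \<le> u' t"
    using after_zeros[OF t0(1)] t1 by force
  define t2 where "t2 = min t1 (t0 + d / 2)"
  have t2: "t0 < t2" "t2 \<le> t1" "t2 < t0 + d" using t0 \<open>d > 0\<close> unfolding t2_def by auto
  \<comment> \<open>\<open>u\<close> is negative on \<open>(t0, t2]\<close>, where \<open>u' \<ge> K u\<close> makes \<open>u(t) e\<^sup>-\<^sup>K\<^sup>t\<close> nondecreasing\<close>
  define v where "v t = u t * exp (- K * t)" for t
  have "v t0 \<le> v t2"
  proof (rule DERIV_nonneg_imp_increasing_open[OF less_imp_le[OF t2(1)]])
    fix t assume t: "t0 < t" "t < t2"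
    have "(v has_real_derivative (u' t - K * u t) * exp (- K * t)) (at t)"
      unfolding v_def using deriv[of t] t t0 t2 t1
      by (auto intro!: derivative_eq_intros simp: algebra_simps)
    moreover have "K * u t \<le> u' t" using K neg_after t t2 t1 by auto
    ultimately show "\<exists>y. (v has_real_derivative y) (at t) \<and> 0 \<le> y" by force
  next
    show "continuous_on {t0..t2} v"
      unfolding v_def using t0 t2 by (auto intro!: continuous_intros intro: continuous_on_subset[OF cont1])
  qed
  moreover have "v t2 < 0" unfolding v_def using neg_after t2 by (simp add: mult_neg_pos)
  ultimately show False using \<open>u t0 = 0\<close> unfolding v_def by simp
qed

lemma nonneg_if_linear_differential_inequality:
  fixes u u' k w :: "real \<Rightarrow> real"
  assumes cont: "continuous_on {0..<T} u"
    and deriv: "\<And>t. 0 < t \<Longrightarrow> t < T \<Longrightarrow> (u has_real_derivative u' t) (at t)"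
    and init: "0 \<le> u 0"
    and cont_k: "continuous_on {0..<T} k"
    and ineq: "\<And>t. 0 < t \<Longrightarrow> t < T \<Longrightarrow> u t < 0 \<Longrightarrow> k t * u t + w t \<le> u' t"
    and w_after_zeros: "\<And>t0. 0 \<le> t0 \<Longrightarrow> t0 < T \<Longrightarrow> u t0 = 0 \<Longrightarrow>
      \<exists>d>0. \<forall>t. t0 < t \<and> t < t0 + d \<and> t < T \<longrightarrow> 0 \<le> w t"
    and t: "0 \<le> t" "t < T"
  shows "0 \<le> u t"
proof (rule nonneg_if_linear_lower_bound_after_zeros[OF cont deriv init _ t])
  fix t0 assume t0: "0 \<le> t0" "t0 < T" "u t0 = 0"
  obtain d1 where "d1 > 0" and d1: "\<And>t. t \<in> {0..<T} \<Longrightarrow> dist t t0 < d1 \<Longrightarrow> dist (k t) (k t0) < 1"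
    using cont_k t0 unfolding continuous_on_iff by (metis atLeastLessThan_iff zero_less_one)
  obtain d2 where "d2 > 0" and d2: "\<And>t. t0 < t \<Longrightarrow> t < t0 + d2 \<Longrightarrow> t < T \<Longrightarrow> 0 \<le> w t"
    using w_after_zeros[OF t0] by blast
  have "(\<bar>k t0\<bar> + 1) * u t \<le> u' t" if t: "t0 < t" "t < t0 + d1" "t < t0 + d2" "t < T" "u t < 0" for t
  proof -
    have "dist (k t) (k t0) < 1" using d1[of t] t t0 by (simp add: dist_real_def)
    hence "k t \<le> \<bar>k t0\<bar> + 1" by (simp add: dist_real_def)
    hence "(\<bar>k t0\<bar> + 1) * u t \<le> k t * u t" using t by (intro mult_right_mono_neg) auto
    moreover have "k t * u t + w t \<le> u' t" "0 \<le> w t" using ineq[of t] d2[of t] t t0 by auto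
    ultimately show ?thesis by linarith
  qed
  hence "\<forall>t. t0 < t \<and> t < t0 + min d1 d2 \<and> t < T \<and> u t < 0 \<longrightarrow> (\<bar>k t0\<bar> + 1) * u t \<le> u' t"
    by (auto simp: min_def)
  moreover have "0 < min d1 d2" using \<open>d1 > 0\<close> \<open>d2 > 0\<close> by simp
  ultimately show "\<exists>d>0. \<exists>K. \<forall>t. t0 < t \<and> t < t0 + d \<and> t < T \<and> u t < 0 \<longrightarrow> K * u t \<le> u' t"
    by blast
qed

lemma DERIV_nonpos_imp_decreasing_on_halfline:
  fixes f f' :: "real \<Rightarrow> real"
  assumes "continuous_on {0..} f" and "\<And>t. 0 < t \<Longrightarrow> (f has_real_derivative f' t) (at t)"
    and "0 \<le> a" "a \<le> b" and "\<And>t. a < t \<Longrightarrow> t < b \<Longrightarrow> f' t \<le> 0"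
  shows "f b \<le> f a"
proof (rule DERIV_nonpos_imp_decreasing_open[OF \<open>a \<le> b\<close>])
  show "continuous_on {a..b} f" using assms(1) by (rule continuous_on_subset) (use assms(3) in auto)
  fix t assume "a < t" "t < b"
  thus "\<exists>y. (f has_real_derivative y) (at t) \<and> y \<le> 0"
    using assms(2-5) by (intro exI[of _ "f' t"]) auto
qed

lemma closed_invariant_if_invariant_while_in_open:
  fixes \<psi> :: "real \<Rightarrow> 'a::topological_space"
  assumes cont: "continuous_on {0..} \<psi>"
    and "closed D" "open U" "D \<subseteq> U" "\<psi> 0 \<in> D"
    and invariant: "\<And>T s. (\<And>t. 0 \<le> t \<Longrightarrow> t < T \<Longrightarrow> \<psi> t \<in> U) \<Longrightarrow> 0 \<le> s \<Longrightarrow> s < T \<Longrightarrow> \<psi> s \<in> D"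
    and "0 \<le> t"
  shows "\<psi> t \<in> D"
proof (rule ccontr)
  assume "\<psi> t \<notin> D"
  define A where "A = {s. 0 \<le> s \<and> \<psi> s \<notin> D}"
  have "t \<in> A" "bdd_below A" using \<open>\<psi> t \<notin> D\<close> \<open>0 \<le> t\<close> unfolding A_def by (auto intro: bdd_belowI[of _ 0])
  define \<tau> where "\<tau> = Inf A"
  have "0 \<le> \<tau>" unfolding \<tau>_def A_def using \<open>t \<in> A\<close> by (intro cInf_greatest) (auto simp: A_def)
  have before: "\<psi> s \<in> D" if "0 \<le> s" "s < \<tau>" for s
    using cInf_lower[OF _ \<open>bdd_below A\<close>, of s] that unfolding \<tau>_def A_def by force
  have "\<psi> \<tau> \<in> D"
  proof (cases "\<tau> = 0")
    case False
    have "closed ({0..\<tau>} \<inter> \<psi> -` D)"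
      by (rule continuous_closed_preimage[OF continuous_on_subset[OF cont] _ \<open>closed D\<close>]) auto
    moreover have "{0..<\<tau>} \<subseteq> {0..\<tau>} \<inter> \<psi> -` D" using before by auto
    ultimately have "closure {0..<\<tau>} \<subseteq> \<psi> -` D" by (meson closure_minimal inf.boundedE)
    thus ?thesis using False \<open>0 \<le> \<tau>\<close> by auto
  qed (use \<open>\<psi> 0 \<in> D\<close> in simp)
  obtain V where "open V" "\<tau> \<in> V" and V: "V \<inter> {0..} \<subseteq> \<psi> -` U"
    using continuous_on_open_invariant[THEN iffD1, OF cont, rule_format, OF \<open>open U\<close>]
      \<open>\<psi> \<tau> \<in> D\<close> \<open>D \<subseteq> U\<close> \<open>0 \<le> \<tau>\<close> by blast
  then obtain d where "d > 0" and d: "ball \<tau> d \<subseteq> V" by (meson open_contains_ball)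
  have in_U: "\<psi> s \<in> U" if "0 \<le> s" "s < \<tau> + d" for s
  proof (cases "s < \<tau>")
    case False
    hence "s \<in> ball \<tau> d" using that by (auto simp: dist_real_def)
    thus ?thesis using d V that by auto
  qed (use before that \<open>D \<subseteq> U\<close> in auto)
  obtain a where "a \<in> A" "a < \<tau> + d"
    using cInf_less_iff[OF _ \<open>bdd_below A\<close>, of "\<tau> + d"] \<open>t \<in> A\<close> \<open>d > 0\<close> unfolding \<tau>_def by auto
  thus False using invariant[of "\<tau> + d" a, OF in_U] unfolding A_def by auto
qed

lemma exp_decay_tendsto_0:
  fixes k :: real
  assumes "0 < k"
  shows "((\<lambda>t. exp (- k * (t - t0))) \<longlongrightarrow> 0) at_top"
proof -
  have "filterlim (\<lambda>t. t - t0) at_top at_top"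
    by (rule filterlim_tendsto_add_at_top[OF tendsto_const filterlim_ident, of "- t0", simplified])
  hence "filterlim (\<lambda>t. - k * (t - t0)) at_bot at_top"
    using assms by (intro filterlim_tendsto_neg_mult_at_bot[OF tendsto_const]) auto
  thus ?thesis by (rule filterlim_compose[OF exp_at_bot])
qed

lemma lipschitz_on_mult_real:
  fixes f g :: "'a::metric_space \<Rightarrow> real"
  assumes f: "C-lipschitz_on U f" and g: "D-lipschitz_on U g"
    and "\<And>x. x \<in> U \<Longrightarrow> \<bar>f x\<bar> \<le> A" "\<And>x. x \<in> U \<Longrightarrow> \<bar>g x\<bar> \<le> B" and "0 \<le> A" "0 \<le> B"
  shows "(A * D + B * C)-lipschitz_on U (\<lambda>x. f x * g x)"
proof (rule lipschitz_onI)
  fix x y assume xy: "x \<in> U" "y \<in> U"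
  have "dist (f x * g x) (f y * g y) = \<bar>f x * (g x - g y) + g y * (f x - f y)\<bar>"
    by (simp add: dist_real_def algebra_simps)
  also have "\<dots> \<le> \<bar>f x\<bar> * dist (g x) (g y) + \<bar>g y\<bar> * dist (f x) (f y)"
    using abs_triangle_ineq[of "f x * (g x - g y)" "g y * (f x - f y)"] by (simp add: dist_real_def abs_mult)
  also have "\<dots> \<le> A * (D * dist x y) + B * (C * dist x y)"
    using assms xy lipschitz_onD[OF f xy] lipschitz_onD[OF g xy]
    by (intro add_mono mult_mono) auto
  finally show "dist (f x * g x) (f y * g y) \<le> (A * D + B * C) * dist x y"
    by (simp add: algebra_simps)
qed (use assms lipschitz_on_nonneg[OF f] lipschitz_on_nonneg[OF g] in simp)

section \<open>Picard iteration for bounded Lipschitz fields\<close>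

lemma lipschitz_on_integral_from_0:
  fixes f :: "real \<Rightarrow> 'a::banach"
  assumes cont: "continuous_on {0..} f" and bound: "\<And>s. 0 \<le> s \<Longrightarrow> norm (f s) \<le> M" and "0 \<le> M"
  shows "M-lipschitz_on {0..} (\<lambda>t. integral {0..t} f)"
proof -
  have "dist (integral {0..t} f) (integral {0..s} f) \<le> M * dist t s" if "0 \<le> s" "s \<le> t" for s t
  proof -
    have "f integrable_on {0..t}" by (intro integrable_continuous_interval continuous_on_subset[OF cont]) auto
    from Henstock_Kurzweil_Integration.integral_combine[OF that this]
    have "integral {0..t} f - integral {0..s} f = integral {s..t} f" by (simp add: algebra_simps)
    also have "norm \<dots> \<le> M * (t - s)"
      using that bound by (intro integral_bound continuous_on_subset[OF cont]) auto
    finally show ?thesis using that by (simp add: dist_norm dist_real_def)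
  qed
  thus ?thesis using \<open>0 \<le> M\<close> unfolding lipschitz_on_def
    by (metis atLeast_iff dist_commute linorder_le_cases)
qed

lemma has_vector_derivative_if_integral_equation:
  fixes f :: "real \<Rightarrow> 'a::banach"
  assumes cont: "continuous_on {0..} f" and eq: "\<And>t. 0 \<le> t \<Longrightarrow> \<psi> t = x0 + integral {0..t} f"
    and "0 \<le> t"
  shows "(\<psi> has_vector_derivative f t) (at t within {0..})"
proof -
  have "((\<lambda>u. x0 + integral {0..u} f) has_vector_derivative f t) (at t within {0..t + 1})"
    using \<open>0 \<le> t\<close> by (auto intro!: derivative_eq_intros integral_has_vector_derivative continuous_on_subset[OF cont])
  hence "(\<psi> has_vector_derivative f t) (at t within {0..t + 1})"
    by (rule has_vector_derivative_transform_within[where d = 1]) (use \<open>0 \<le> t\<close> eq in auto)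
  moreover have "at t within {0..t + 1} = at t within {0..}"
    by (rule at_within_nhd[where S = "{..<t + 1}"]) auto
  ultimately show ?thesis by simp
qed

lemma integral_cmult_power_from_0:
  fixes C t :: real
  assumes "0 \<le> t"
  shows "integral {0..t} (\<lambda>s. C * s ^ m) = C * t ^ Suc m / Suc m"
proof -
  have "((\<lambda>s. C * s ^ Suc m / Suc m) has_real_derivative C * (real (Suc m) * s ^ (Suc m - Suc 0)) / Suc m)
      (at s within {0..t})" for s
    by (intro DERIV_cdivide DERIV_cmult DERIV_pow)
  hence "((\<lambda>s. C * s ^ m) has_integral C * t ^ Suc m / Suc m - C * 0 ^ Suc m / Suc m) {0..t}"
    using assms by (intro fundamental_theorem_of_calculus)
      (auto simp: has_real_derivative_iff_has_vector_derivative[symmetric] simp del: of_nat_Suc)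
  hence "((\<lambda>s. C * s ^ m) has_integral C * t ^ Suc m / Suc m) {0..t}" by simp
  thus ?thesis by (rule integral_unique)
qed

fun picard_iter :: "('a::euclidean_space \<Rightarrow> 'a) \<Rightarrow> 'a \<Rightarrow> nat \<Rightarrow> real \<Rightarrow> 'a" where
  "picard_iter G x0 0 t = x0"
| picard_iter_Suc: "picard_iter G x0 (Suc n) t = x0 + integral {0..t} (\<lambda>s. G (picard_iter G x0 n s))"

declare picard_iter_Suc [simp del]

locale bounded_lipschitz_field =
  fixes G :: "'a::euclidean_space \<Rightarrow> 'a" and L M :: real
  assumes lipschitz: "L-lipschitz_on UNIV G"
    and bounded: "\<And>x. norm (G x) \<le> M"
begin

lemma L_nonneg: "0 \<le> L"
  using lipschitz by (rule lipschitz_on_nonneg)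

lemma M_nonneg: "0 \<le> M"
  using norm_ge_zero bounded by (rule order_trans)

lemma continuous_on_G: "continuous_on S G"
  using lipschitz_on_continuous_on[OF lipschitz] by (rule continuous_on_subset) simp

lemma picard_iter_lipschitz: "M-lipschitz_on {0..} (picard_iter G x0 n)"
proof (induction n)
  case 0
  show ?case using M_nonneg by (simp add: lipschitz_on_def)
next
  case (Suc n)
  have "continuous_on {0..} (\<lambda>s. G (picard_iter G x0 n s))"
    by (rule continuous_on_compose2[OF continuous_on_G lipschitz_on_continuous_on[OF Suc.IH]]) auto
  hence "(0 + M)-lipschitz_on {0..} (\<lambda>t. x0 + integral {0..t} (\<lambda>s. G (picard_iter G x0 n s)))"
    by (intro lipschitz_intros lipschitz_on_integral_from_0 bounded M_nonneg)
  thus ?case by (simp add: picard_iter_Suc)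
qed

lemma continuous_on_G_picard_iter: "continuous_on {0..} (\<lambda>s. G (picard_iter G x0 n s))"
  by (rule continuous_on_compose2[OF continuous_on_G lipschitz_on_continuous_on[OF picard_iter_lipschitz]]) auto

lemma integrable_G_picard_iter: "(\<lambda>s. G (picard_iter G x0 n s)) integrable_on {0..t}"
  by (intro integrable_continuous_interval continuous_on_subset[OF continuous_on_G_picard_iter]) auto

lemma picard_iter_step_le:
  assumes "0 \<le> t"
  shows "norm (picard_iter G x0 (Suc n) t - picard_iter G x0 n t) \<le> M * L ^ n * t ^ Suc n / fact (Suc n)"
  using assms
proof (induction n arbitrary: t)
  case 0
  have "norm (integral {0..t} (\<lambda>s. G x0)) \<le> M * (t - 0)"
    using 0 bounded by (intro integral_bound) auto
  thus ?case by (simp add: picard_iter_Suc)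
next
  case (Suc n)
  have "picard_iter G x0 (Suc (Suc n)) t - picard_iter G x0 (Suc n) t
      = integral {0..t} (\<lambda>s. G (picard_iter G x0 (Suc n) s) - G (picard_iter G x0 n s))"
    by (simp add: picard_iter_Suc[of G x0 "Suc n" t] picard_iter_Suc[of G x0 n t]
        integral_diff[OF integrable_G_picard_iter integrable_G_picard_iter])
  also have "norm \<dots> \<le> integral {0..t} (\<lambda>s. (L * M * L ^ n / fact (Suc n)) * s ^ Suc n)"
  proof (rule integral_norm_bound_integral)
    fix s assume s: "s \<in> {0..t}"
    have "norm (G (picard_iter G x0 (Suc n) s) - G (picard_iter G x0 n s))
        \<le> L * norm (picard_iter G x0 (Suc n) s - picard_iter G x0 n s)"
      using lipschitz by (rule lipschitz_on_normD) auto
    also have "\<dots> \<le> L * (M * L ^ n * s ^ Suc n / fact (Suc n))"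
      using Suc.IH[of s] s L_nonneg by (intro mult_left_mono) auto
    finally show "norm (G (picard_iter G x0 (Suc n) s) - G (picard_iter G x0 n s))
        \<le> (L * M * L ^ n / fact (Suc n)) * s ^ Suc n" by simp
  qed (auto intro!: integrable_diff integrable_G_picard_iter integrable_continuous_interval continuous_intros
      intro: continuous_on_subset[OF continuous_on_G_picard_iter])
  also have "\<dots> = (L * M * L ^ n / fact (Suc n)) * t ^ Suc (Suc n) / Suc (Suc n)"
    by (rule integral_cmult_power_from_0[OF Suc.prems])
  also have "\<dots> = M * L ^ Suc n * t ^ Suc (Suc n) / fact (Suc (Suc n))"
    by (simp add: field_simps)
  finally show ?case .
qed

lemma picard_iter_convergent:
  assumes "0 \<le> t"
  shows "convergent (\<lambda>n. picard_iter G x0 n t)"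
proof -
  define d where "d k = picard_iter G x0 (Suc k) t - picard_iter G x0 k t" for k
  have "summable (\<lambda>k. (M * t) * (inverse (fact k) * (L * t) ^ k))"
    by (intro summable_mult summable_exp)
  moreover have "norm (d k) \<le> (M * t) * (inverse (fact k) * (L * t) ^ k)" for k
  proof -
    have "norm (d k) \<le> M * L ^ k * t ^ Suc k / fact (Suc k)"
      unfolding d_def using picard_iter_step_le[OF assms] .
    also have "\<dots> \<le> M * L ^ k * t ^ Suc k / fact k"
      using assms M_nonneg L_nonneg by (intro divide_left_mono fact_mono) auto
    finally show ?thesis by (simp add: power_mult_distrib divide_inverse mult_ac)
  qed
  ultimately have "summable d" by (rule summable_comparison_test'[where N = 0])
  hence "(\<lambda>n. x0 + (\<Sum>k<n. d k)) \<longlonglongrightarrow> x0 + suminf d" by (intro tendsto_add tendsto_const summable_LIMSEQ)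
  moreover have "x0 + (\<Sum>k<n. d k) = picard_iter G x0 n t" for n
    unfolding d_def by (subst sum_lessThan_telescope) simp
  ultimately show ?thesis unfolding convergent_def by auto
qed

definition picard_solution :: "'a \<Rightarrow> real \<Rightarrow> 'a" where
  "picard_solution x0 t = lim (\<lambda>n. picard_iter G x0 n t)"

lemma picard_iter_tendsto: "0 \<le> t \<Longrightarrow> (\<lambda>n. picard_iter G x0 n t) \<longlonglongrightarrow> picard_solution x0 t"
  unfolding picard_solution_def by (rule convergent_LIMSEQ_iff[THEN iffD1, OF picard_iter_convergent])

lemma picard_solution_lipschitz: "M-lipschitz_on {0..} (picard_solution x0)"
proof (rule lipschitz_onI)
  fix s t :: real assume "s \<in> {0..}" "t \<in> {0..}"
  hence "(\<lambda>n. dist (picard_iter G x0 n s) (picard_iter G x0 n t)) \<longlonglongrightarrow> dist (picard_solution x0 s) (picard_solution x0 t)"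
    by (intro tendsto_dist picard_iter_tendsto) auto
  thus "dist (picard_solution x0 s) (picard_solution x0 t) \<le> M * dist s t"
    using lipschitz_onD[OF picard_iter_lipschitz] \<open>s \<in> {0..}\<close> \<open>t \<in> {0..}\<close>
    by (intro tendsto_upperbound) auto
qed (rule M_nonneg)

lemma continuous_on_G_picard_solution: "continuous_on {0..} (\<lambda>s. G (picard_solution x0 s))"
  by (rule continuous_on_compose2[OF continuous_on_G lipschitz_on_continuous_on[OF picard_solution_lipschitz]]) auto

lemma picard_solution_integral_equation:
  assumes "0 \<le> t"
  shows "picard_solution x0 t = x0 + integral {0..t} (\<lambda>s. G (picard_solution x0 s))"
proof -
  have "(\<lambda>n. integral {0..t} (\<lambda>s. G (picard_iter G x0 n s))) \<longlonglongrightarrow> integral {0..t} (\<lambda>s. G (picard_solution x0 s))"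
  proof (rule dominated_convergence(2)[where h = "\<lambda>_. M"])
    fix s assume "s \<in> {0..t}"
    thus "(\<lambda>n. G (picard_iter G x0 n s)) \<longlonglongrightarrow> G (picard_solution x0 s)"
      by (intro continuous_on_tendsto_compose[OF continuous_on_G[of UNIV] picard_iter_tendsto]) auto
  qed (auto intro: integrable_G_picard_iter bounded)
  hence "(\<lambda>n. picard_iter G x0 (Suc n) t) \<longlonglongrightarrow> x0 + integral {0..t} (\<lambda>s. G (picard_solution x0 s))"
    by (simp add: tendsto_add picard_iter_Suc)
  moreover have "(\<lambda>n. picard_iter G x0 (Suc n) t) \<longlonglongrightarrow> picard_solution x0 t"
    using LIMSEQ_Suc[OF picard_iter_tendsto[OF assms]] .
  ultimately show ?thesis by (rule LIMSEQ_unique[rotated])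
qed

theorem picard_solution_solves:
  "picard_solution x0 0 = x0"
  "0 \<le> t \<Longrightarrow> (picard_solution x0 has_vector_derivative G (picard_solution x0 t)) (at t within {0..})"
  using picard_solution_integral_equation[of 0]
  by (auto intro: has_vector_derivative_if_integral_equation continuous_on_G_picard_solution
      picard_solution_integral_equation)

end

section \<open>Invariance of the simplex\<close>

lemma is_solution_continuous_on: "is_solution F x \<Longrightarrow> continuous_on {0..} x"
  unfolding is_solution_def continuous_on_eq_continuous_within
  using has_vector_derivative_continuous by blast

lemma is_solution_has_vector_derivative_at:
  assumes "is_solution F x" "0 < t"
  shows "(x has_vector_derivative F (x t)) (at t)"
proof -
  have "at t within {0..} = at t" using \<open>0 < t\<close> by (intro at_within_interior) auto
  moreover have "(x has_vector_derivative F (x t)) (at t within {0..})"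
    using assms unfolding is_solution_def by simp
  ultimately show ?thesis by simp
qed

lemma sirs_field_Pair:
  "sirs_field b beta nu delta alpha p (S, I, R) =
    (b * (1 - S - p * I) - (beta - delta) * S * I + alpha * R,
     (beta * S - ((1 - p) * b + nu + delta) + delta * I) * I,
     nu * I - (b + alpha - delta * I) * R)"
  by (simp add: sirs_field_def)

lemma closed_D_fra: "closed D_fra"
proof -
  have "D_fra = {z. 0 \<le> fst z \<and> 0 \<le> fst (snd z) \<and> 0 \<le> snd (snd z) \<and> fst z + fst (snd z) + snd (snd z) = 1}"
    unfolding D_fra_def by auto
  also have "closed \<dots>"
    by (intro closed_Collect_conj closed_Collect_le closed_Collect_eq continuous_intros)
  finally show ?thesis .
qed

lemma has_real_derivative_components:
  fixes x :: "real \<Rightarrow> real \<times> real \<times> real"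
  assumes "(x has_vector_derivative (S', I', R')) F"
  shows "((\<lambda>t. fst (x t)) has_real_derivative S') F"
    and "((\<lambda>t. fst (snd (x t))) has_real_derivative I') F"
    and "((\<lambda>t. snd (snd (x t))) has_real_derivative R') F"
  using bounded_linear.has_vector_derivative[OF bounded_linear_fst assms]
    bounded_linear.has_vector_derivative[OF bounded_linear_fst
      bounded_linear.has_vector_derivative[OF bounded_linear_snd assms]]
    bounded_linear.has_vector_derivative[OF bounded_linear_snd
      bounded_linear.has_vector_derivative[OF bounded_linear_snd assms]]
  by (simp_all add: has_real_derivative_iff_has_vector_derivative)

lemma dist_E0_le:
  fixes S I R :: real
  assumes "(S, I, R) \<in> D_fra"
  shows "dist (S, I, R) (1, 0, 0) \<le> 2 * (I + R)"
proof -
  have "dist (S, I, R) (1, 0, 0) = norm (S - 1, I, R)" by (simp add: dist_norm)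
  also have "\<dots> \<le> \<bar>S - 1\<bar> + (\<bar>I\<bar> + \<bar>R\<bar>)"
    using norm_Pair_le[of "S - 1" "(I, R)"] norm_Pair_le[of I R] by simp
  also have "\<dots> = 2 * (I + R)" using assms unfolding D_fra_def by auto
  finally show ?thesis .
qed

lemma dist_E0_ge:
  fixes S I R :: real
  shows "\<bar>I\<bar> \<le> dist (S, I, R) (1, 0, 0)" "\<bar>R\<bar> \<le> dist (S, I, R) (1, 0, 0)"
  using dist_snd_le[of "(S, I, R)" "(1, 0, 0)"] dist_fst_le[of "(I, R)" "(0, 0)"]
    dist_snd_le[of "(I, R)" "(0, 0)"]
  by (simp_all add: dist_real_def)

lemma infection_factor_le:
  fixes beta gamma delta S I :: real
  assumes "0 \<le> S" "S + I \<le> 1" "beta \<le> gamma" "0 \<le> gamma"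
  shows "beta * S - gamma + delta * I \<le> - (gamma - delta) * I"
proof -
  have "beta * S \<le> gamma * (1 - I)"
  proof (cases "0 \<le> beta")
    case True
    hence "beta * S \<le> beta * (1 - I)" using assms by (intro mult_left_mono) auto
    also have "\<dots> \<le> gamma * (1 - I)" using assms by (intro mult_right_mono) auto
    finally show ?thesis .
  next
    case False
    hence "beta * S \<le> 0" using assms by (simp add: mult_nonpos_nonneg)
    also have "0 \<le> gamma * (1 - I)" using assms by simp
    finally show ?thesis .
  qed
  thus ?thesis by (simp add: algebra_simps)
qed

locale sirs_local_solution =
  fixes b beta nu delta alpha p T :: real and S I R :: "real \<Rightarrow> real"
  assumes params: "0 < b" "0 \<le> nu" "0 \<le> alpha" "0 \<le> p" "p < 1"
    and cont_S: "continuous_on {0..<T} S" and cont_I: "continuous_on {0..<T} I"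
    and cont_R: "continuous_on {0..<T} R"
    and deriv_S: "\<And>t. 0 < t \<Longrightarrow> t < T \<Longrightarrow>
      (S has_real_derivative b * (1 - S t - p * I t) - (beta - delta) * S t * I t + alpha * R t) (at t)"
    and deriv_I: "\<And>t. 0 < t \<Longrightarrow> t < T \<Longrightarrow>
      (I has_real_derivative (beta * S t - ((1 - p) * b + nu + delta) + delta * I t) * I t) (at t)"
    and deriv_R: "\<And>t. 0 < t \<Longrightarrow> t < T \<Longrightarrow>
      (R has_real_derivative nu * I t - (b + alpha - delta * I t) * R t) (at t)"
    and init: "(S 0, I 0, R 0) \<in> D_fra"
begin

lemma I_nonneg:
  assumes "0 \<le> t" "t < T"
  shows "0 \<le> I t"
proof (rule nonneg_if_linear_differential_inequality[OF cont_I deriv_I _ _ _ _ assms,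
      where k = "\<lambda>t. beta * S t - ((1 - p) * b + nu + delta) + delta * I t" and w = "\<lambda>_. 0"])
  show "continuous_on {0..<T} (\<lambda>t. beta * S t - ((1 - p) * b + nu + delta) + delta * I t)"
    by (intro continuous_intros cont_S cont_I)
qed (use init in \<open>auto simp: D_fra_def intro: exI[of _ 1]\<close>)

lemma R_nonneg:
  assumes "0 \<le> t" "t < T"
  shows "0 \<le> R t"
proof (rule nonneg_if_linear_differential_inequality[OF cont_R deriv_R _ _ _ _ assms,
      where k = "\<lambda>t. - (b + alpha - delta * I t)" and w = "\<lambda>t. nu * I t"])
  show "continuous_on {0..<T} (\<lambda>t. - (b + alpha - delta * I t))"
    by (intro continuous_intros cont_I)
  fix t0 :: real assume "0 \<le> t0"
  show "\<exists>d>0. \<forall>t. t0 < t \<and> t < t0 + d \<and> t < T \<longrightarrow> 0 \<le> nu * I t"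
    using I_nonneg params \<open>0 \<le> t0\<close> by (intro exI[of _ 1]) auto
qed (use init in \<open>auto simp: D_fra_def algebra_simps\<close>)

lemma total_eq_1: "0 \<le> t \<Longrightarrow> t < T \<Longrightarrow> S t + I t + R t = 1"
proof -
  assume t: "0 \<le> t" "t < T"
  \<comment> \<open>\<open>u = c (1 - (S + I + R))\<close> solves \<open>u' = -(b - \<delta> I) u\<close> with \<open>u(0) = 0\<close>, for every \<open>c\<close>\<close>
  have "0 \<le> c * (1 - (S t + I t + R t))" for c
  proof (rule nonneg_if_linear_differential_inequality[where u = "\<lambda>t. c * (1 - (S t + I t + R t))"
        and k = "\<lambda>t. - (b - delta * I t)" and w = "\<lambda>_. 0" and t = t])
    fix s assume "0 < s" "s < T"
    thus "((\<lambda>t. c * (1 - (S t + I t + R t))) has_real_derivative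
        - (b - delta * I s) * (c * (1 - (S s + I s + R s)))) (at s)"
      by (auto intro!: derivative_eq_intros deriv_S deriv_I deriv_R simp: algebra_simps)
  qed (use init t in \<open>auto intro!: continuous_intros cont_S cont_I cont_R exI[of _ 1] simp: D_fra_def\<close>)
  from this[of 1] this[of "-1"] show ?thesis by simp
qed

lemma S_nonneg: "0 \<le> t \<Longrightarrow> t < T \<Longrightarrow> 0 \<le> S t"
proof (rule nonneg_if_linear_differential_inequality[OF cont_S deriv_S,
      where k = "\<lambda>t. - (b + (beta - delta) * I t)" and w = "\<lambda>t. b * (1 - p * I t) + alpha * R t"])
  fix t0 assume t0: "0 \<le> t0" "t0 < T" "S t0 = 0"
  let ?w = "\<lambda>t. b * (1 - p * I t) + alpha * R t"
  \<comment> \<open>at a zero of \<open>S\<close> the inflow \<open>w\<close> is positive, since there \<open>I \<le> 1\<close> and \<open>p < 1\<close>\<close>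
  have "I t0 \<le> 1" using total_eq_1[OF t0(1,2)] R_nonneg[OF t0(1,2)] t0 by simp
  hence "p * I t0 \<le> p" using params I_nonneg[OF t0(1,2)] by (simp add: mult_left_le)
  hence "p * I t0 < 1" using params by simp
  hence "0 < ?w t0" using params R_nonneg[OF t0(1,2)] by (simp add: add_pos_nonneg)
  moreover have "continuous_on {0..<T} ?w" by (intro continuous_intros cont_I cont_R)
  ultimately obtain d where "d > 0" and d: "\<And>t. t \<in> {0..<T} \<Longrightarrow> dist t t0 < d \<Longrightarrow> dist (?w t) (?w t0) < ?w t0"
    using t0 unfolding continuous_on_iff by (metis atLeastLessThan_iff)
  have "0 \<le> ?w t" if "t0 < t" "t < t0 + d" "t < T" for t
    using d[of t] that t0 by (auto simp: dist_real_def)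
  thus "\<exists>d>0. \<forall>t. t0 < t \<and> t < t0 + d \<and> t < T \<longrightarrow> 0 \<le> ?w t" using \<open>d > 0\<close> by blast
qed (use init in \<open>auto intro!: continuous_intros cont_I simp: D_fra_def algebra_simps\<close>)

lemma in_D_fra: "0 \<le> t \<Longrightarrow> t < T \<Longrightarrow> (S t, I t, R t) \<in> D_fra"
  using S_nonneg I_nonneg R_nonneg total_eq_1 unfolding D_fra_def by auto

end

lemma sirs_local_solution_in_D_fra:
  fixes x :: "real \<Rightarrow> real \<times> real \<times> real"
  assumes params: "0 < b" "0 \<le> nu" "0 \<le> alpha" "0 \<le> p" "p < 1"
    and cont: "continuous_on {0..<T} x"
    and deriv: "\<And>t. 0 < t \<Longrightarrow> t < T \<Longrightarrow> (x has_vector_derivative sirs_field b beta nu delta alpha p (x t)) (at t)"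
    and init: "x 0 \<in> D_fra" and t: "0 \<le> t" "t < T"
  shows "x t \<in> D_fra"
proof -
  have field: "sirs_field b beta nu delta alpha p (x t) =
      sirs_field b beta nu delta alpha p (fst (x t), fst (snd (x t)), snd (snd (x t)))" for t
    by simp
  interpret sirs_local_solution b beta nu delta alpha p T "\<lambda>t. fst (x t)" "\<lambda>t. fst (snd (x t))" "\<lambda>t. snd (snd (x t))"
    using params init has_real_derivative_components[OF deriv[unfolded field sirs_field_Pair]]
    by unfold_locales (auto intro!: continuous_intros cont)
  show ?thesis using in_D_fra[OF t] by simp
qed

section \<open>Existence of solutions\<close>

lemma sirs_field_lipschitz_on_bounded:
  assumes "bounded B"
  obtains L where "L-lipschitz_on B (sirs_field b beta nu delta alpha p)"
proof -
  obtain r where "0 \<le> r" and r: "\<And>z. z \<in> B \<Longrightarrow> norm z \<le> r"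
    using assms bounded_pos by (metis less_imp_le)
  have coords_lipschitz: "1-lipschitz_on B (\<lambda>z. fst z)" "1-lipschitz_on B (\<lambda>z. fst (snd z))"
      "1-lipschitz_on B (\<lambda>z. snd (snd z))"
    by (auto simp: lipschitz_on_def intro: dist_fst_le dist_snd_le order_trans)
  have coords_bounded: "\<bar>fst z\<bar> \<le> r" "\<bar>fst (snd z)\<bar> \<le> r" "\<bar>snd (snd z)\<bar> \<le> r" if "z \<in> B" for z
    using r[OF that] norm_fst_le[of "fst z" "snd z"] norm_snd_le[of "snd z" "fst z"]
      norm_fst_le[of "fst (snd z)" "snd (snd z)"] norm_snd_le[of "snd (snd z)" "fst (snd z)"]
    by auto
  have products_lipschitz:
      "(r * 1 + r * 1)-lipschitz_on B (\<lambda>z. fst z * fst (snd z))"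
      "(r * 1 + r * 1)-lipschitz_on B (\<lambda>z. fst (snd z) * fst (snd z))"
      "(r * 1 + r * 1)-lipschitz_on B (\<lambda>z. fst (snd z) * snd (snd z))"
    using lipschitz_on_mult_real[OF coords_lipschitz(1) coords_lipschitz(2) coords_bounded(1,2) \<open>0 \<le> r\<close> \<open>0 \<le> r\<close>]
      lipschitz_on_mult_real[OF coords_lipschitz(2) coords_lipschitz(2) coords_bounded(2,2) \<open>0 \<le> r\<close> \<open>0 \<le> r\<close>]
      lipschitz_on_mult_real[OF coords_lipschitz(2) coords_lipschitz(3) coords_bounded(2,3) \<open>0 \<le> r\<close> \<open>0 \<le> r\<close>]
    by simp_all
  have field: "sirs_field b beta nu delta alpha p z =
      (b - b * fst z - (b * p) * fst (snd z) - (beta - delta) * (fst z * fst (snd z)) + alpha * snd (snd z),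
       beta * (fst z * fst (snd z)) - ((1 - p) * b + nu + delta) * fst (snd z) + delta * (fst (snd z) * fst (snd z)),
       nu * fst (snd z) - (b + alpha) * snd (snd z) + delta * (fst (snd z) * snd (snd z)))" for z
    by (cases z) (simp add: sirs_field_Pair algebra_simps)
  have "\<exists>L. L-lipschitz_on B (sirs_field b beta nu delta alpha p)"
    unfolding field
    by (rule exI, (rule lipschitz_on_Pair lipschitz_on_add lipschitz_on_diff lipschitz_on_cmult_real
        lipschitz_on_constant coords_lipschitz products_lipschitz)+)
  thus ?thesis using that by blast
qed

lemma lipschitz_bounded_clamp_extension:
  fixes F :: "'a::euclidean_space \<Rightarrow> 'b::real_normed_vector"
  assumes F: "L-lipschitz_on (cbox lo hi) F" and lo_hi: "\<And>i. i \<in> Basis \<Longrightarrow> lo \<bullet> i \<le> hi \<bullet> i"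
  obtains M where "L-lipschitz_on UNIV (\<lambda>z. F (clamp lo hi z))" "\<And>z. norm (F (clamp lo hi z)) \<le> M"
proof -
  have "clamp lo hi ` UNIV \<subseteq> cbox lo hi" using clamp_in_interval[OF lo_hi] by blast
  moreover have "1-lipschitz_on UNIV (clamp lo hi)" by (simp add: lipschitz_on_def dist_clamps_le_dist_args)
  ultimately have "(L * 1)-lipschitz_on UNIV (\<lambda>z. F (clamp lo hi z))"
    by (intro lipschitz_on_compose2 lipschitz_on_subset[OF F])
  moreover have "bounded (range (\<lambda>z. F (clamp lo hi z)))"
    by (intro clamp_bounded compact_imp_bounded compact_continuous_image compact_cbox
        lipschitz_on_continuous_on[OF F])
  ultimately show ?thesis using that by (auto simp: bounded_iff)
qed

lemma sirs_solution_exists: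
  assumes params: "0 < b" "0 \<le> nu" "0 \<le> alpha" "0 \<le> p" "p < 1" and "x0 \<in> D_fra"
  shows "\<exists>x. is_solution (sirs_field b beta nu delta alpha p) x \<and> x 0 = x0"
proof -
  define F where "F = sirs_field b beta nu delta alpha p"
  define lo hi :: "real \<times> real \<times> real" where "lo = (-1, -1, -1)" and "hi = (2, 2, 2)"
  have "i \<in> Basis \<Longrightarrow> lo \<bullet> i \<le> hi \<bullet> i" for i by (auto simp: lo_def hi_def Basis_prod_def)
  moreover obtain L where "L-lipschitz_on (cbox lo hi) F"
    using sirs_field_lipschitz_on_bounded[OF bounded_cbox] unfolding F_def by blast
  \<comment> \<open>the clamped field \<open>G\<close> is globally Lipschitz and bounded, and agrees with \<open>F\<close> on \<open>box lo hi \<supseteq> D_fra\<close>\<close>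
  ultimately obtain M where "L-lipschitz_on UNIV (\<lambda>z. F (clamp lo hi z))" "\<And>z. norm (F (clamp lo hi z)) \<le> M"
    using lipschitz_bounded_clamp_extension by blast
  define G where "G z = F (clamp lo hi z)" for z
  interpret bounded_lipschitz_field G L M by unfold_locales (use \<open>\<And>z. norm (F (clamp lo hi z)) \<le> M\<close>
      \<open>L-lipschitz_on UNIV (\<lambda>z. F (clamp lo hi z))\<close> in \<open>simp_all add: G_def\<close>)
  have G_eq: "G z = F z" if "z \<in> cbox lo hi" for z unfolding G_def using that by simp
  have D_box: "D_fra \<subseteq> box lo hi" by (auto simp: D_fra_def lo_def hi_def mem_box Basis_prod_def)
  define \<psi> where "\<psi> = picard_solution x0"
  have \<psi>0: "\<psi> 0 = x0" and \<psi>': "\<And>t. 0 \<le> t \<Longrightarrow> (\<psi> has_vector_derivative G (\<psi> t)) (at t within {0..})"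
    unfolding \<psi>_def by (rule picard_solution_solves)+
  have cont: "continuous_on {0..} \<psi>"
    unfolding \<psi>_def by (rule lipschitz_on_continuous_on[OF picard_solution_lipschitz])
  have in_D: "\<psi> t \<in> D_fra" if "0 \<le> t" for t
  proof (rule closed_invariant_if_invariant_while_in_open[OF cont closed_D_fra open_box D_box _ _ that])
    show "\<psi> 0 \<in> D_fra" using \<psi>0 \<open>x0 \<in> D_fra\<close> by simp
    fix T s assume in_box: "\<And>t. 0 \<le> t \<Longrightarrow> t < T \<Longrightarrow> \<psi> t \<in> box lo hi" and s: "0 \<le> s" "s < T"
    show "\<psi> s \<in> D_fra"
    proof (rule sirs_local_solution_in_D_fra[OF params _ _ _ s])
      show "continuous_on {0..<T} \<psi>" using cont by (rule continuous_on_subset) auto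
      fix t assume t: "0 < t" "t < T"
      have "at t within {0..} = at t" using t by (intro at_within_interior) auto
      moreover have "G (\<psi> t) = F (\<psi> t)" using in_box[of t] t box_subset_cbox by (intro G_eq) force
      ultimately show "(\<psi> has_vector_derivative sirs_field b beta nu delta alpha p (\<psi> t)) (at t)"
        using \<psi>'[of t] t unfolding F_def by simp
    qed (use \<psi>0 \<open>x0 \<in> D_fra\<close> in simp)
  qed
  have "is_solution F \<psi>"
    unfolding is_solution_def using \<psi>' in_D D_box box_subset_cbox G_eq by (metis subsetD)
  thus ?thesis using \<psi>0 unfolding F_def by blast
qed

section \<open>The disease-free equilibrium\<close>

locale sirs_solution =
  fixes b beta nu delta alpha p :: real and x :: "real \<Rightarrow> real \<times> real \<times> real" and S I R :: "real \<Rightarrow> real"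
  assumes params: "0 < b" "0 \<le> nu" "0 \<le> delta" "0 \<le> alpha" "0 \<le> p" "p < 1"
    and solution: "is_solution (sirs_field b beta nu delta alpha p) x"
    and init: "x 0 \<in> D_fra"
    and components: "\<And>t. x t = (S t, I t, R t)"
begin

lemma in_D_fra:
  assumes "0 \<le> t"
  shows "x t \<in> D_fra"
proof (rule sirs_local_solution_in_D_fra[where T = "t + 1" and x = x and beta = beta and delta = delta,
      OF params(1,2,4,5,6) _ _ init assms])
  show "continuous_on {0..<t + 1} x"
    using is_solution_continuous_on[OF solution] by (rule continuous_on_subset) auto
qed (use is_solution_has_vector_derivative_at[OF solution] in auto)

lemma S_nonneg: "0 \<le> t \<Longrightarrow> 0 \<le> S t"
  and I_nonneg: "0 \<le> t \<Longrightarrow> 0 \<le> I t"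
  and R_nonneg: "0 \<le> t \<Longrightarrow> 0 \<le> R t"
  and total_eq_1: "0 \<le> t \<Longrightarrow> S t + I t + R t = 1"
  using in_D_fra unfolding components D_fra_def by auto

lemma I_le_1: "0 \<le> t \<Longrightarrow> I t \<le> 1"
  using S_nonneg[of t] R_nonneg[of t] total_eq_1[of t] by linarith

lemma R_le_1: "0 \<le> t \<Longrightarrow> R t \<le> 1"
  using S_nonneg[of t] I_nonneg[of t] total_eq_1[of t] by linarith

lemma continuous_on_I: "continuous_on {0..} I"
  and continuous_on_R: "continuous_on {0..} R"
  using continuous_on_fst[OF continuous_on_snd[OF is_solution_continuous_on[OF solution]]]
    continuous_on_snd[OF continuous_on_snd[OF is_solution_continuous_on[OF solution]]]
  unfolding components by simp_all

lemma deriv_I: "0 < t \<Longrightarrow>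
    (I has_real_derivative (beta * S t - ((1 - p) * b + nu + delta) + delta * I t) * I t) (at t)"
  and deriv_R: "0 < t \<Longrightarrow> (R has_real_derivative nu * I t - (b + alpha - delta * I t) * R t) (at t)"
  using has_real_derivative_components[OF is_solution_has_vector_derivative_at[OF solution,
        unfolded components sirs_field_Pair]]
  by simp_all

lemma I_deriv_le:
  assumes "beta \<le> (1 - p) * b + nu + delta" "0 \<le> t"
  shows "(beta * S t - ((1 - p) * b + nu + delta) + delta * I t) * I t \<le> - ((1 - p) * b + nu) * I t * I t"
proof -
  have "0 \<le> S t" "S t + I t \<le> 1"
    using S_nonneg[OF \<open>0 \<le> t\<close>] R_nonneg[OF \<open>0 \<le> t\<close>] total_eq_1[OF \<open>0 \<le> t\<close>] by auto
  moreover have "0 \<le> (1 - p) * b + nu + delta" using params by simp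
  ultimately have "beta * S t - ((1 - p) * b + nu + delta) + delta * I t \<le> - ((1 - p) * b + nu + delta - delta) * I t"
    by (rule infection_factor_le[OF _ _ assms(1)])
  thus ?thesis using I_nonneg[OF \<open>0 \<le> t\<close>] by (simp add: mult_right_mono)
qed

lemma I_antimono:
  assumes "beta \<le> (1 - p) * b + nu + delta" "0 \<le> s" "s \<le> t"
  shows "I t \<le> I s"
proof (rule DERIV_nonpos_imp_decreasing_on_halfline[OF continuous_on_I deriv_I assms(2,3)])
  fix u assume "s < u"
  hence "(beta * S u - ((1 - p) * b + nu + delta) + delta * I u) * I u \<le> - ((1 - p) * b + nu) * I u * I u"
    using assms by (intro I_deriv_le) auto
  also have "\<dots> \<le> 0"
  proof -
    have "0 \<le> ((1 - p) * b + nu) * (I u * I u)" by (rule mult_nonneg_nonneg) (use params in auto)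
    thus ?thesis by (simp only: mult_minus_left mult.assoc)
  qed
  finally show "(beta * S u - ((1 - p) * b + nu + delta) + delta * I u) * I u \<le> 0" .
qed


lemma I_eventually_less:
  assumes "beta \<le> (1 - p) * b + nu + delta" "0 < e"
  shows "\<exists>T \<ge> 0. \<forall>t \<ge> T. I t < e"
proof -
  define c where "c = (1 - p) * b + nu"
  have "0 < c" unfolding c_def using params by (simp add: add_pos_nonneg)
  define T where "T = 2 / (c * e\<^sup>2)"
  have "0 \<le> T" unfolding T_def using \<open>0 < c\<close> by simp
  have "I T < e"
  proof (rule ccontr)
    assume "\<not> I T < e"
    hence large: "e \<le> I s" if "0 \<le> s" "s \<le> T" for s using I_antimono[OF assms(1) that] by simp
    \<comment> \<open>while \<open>I \<ge> e\<close>, \<open>I' \<le> -c I\<^sup>2 \<le> -c e\<^sup>2\<close>, so \<open>I\<close> would drop by 2 on \<open>[0, T]\<close>\<close>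
    have "I T + c * e\<^sup>2 * T \<le> I 0 + c * e\<^sup>2 * 0"
    proof (rule DERIV_nonpos_imp_decreasing_on_halfline[where f = "\<lambda>s. I s + c * e\<^sup>2 * s", OF _ _ _ \<open>0 \<le> T\<close>])
      show "continuous_on {0..} (\<lambda>s. I s + c * e\<^sup>2 * s)" by (intro continuous_intros continuous_on_I)
      fix s :: real assume "0 < s"
      thus "((\<lambda>s. I s + c * e\<^sup>2 * s) has_real_derivative
          (beta * S s - ((1 - p) * b + nu + delta) + delta * I s) * I s + c * e\<^sup>2) (at s)"
        by (auto intro!: derivative_eq_intros deriv_I)
    next
      fix s assume s: "0 < s" "s < T"
      have "e\<^sup>2 \<le> I s * I s" using large[of s] s \<open>0 < e\<close> by (simp add: power2_eq_square mult_mono)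
      hence "c * e\<^sup>2 \<le> c * (I s * I s)" using \<open>0 < c\<close> by simp
      thus "(beta * S s - ((1 - p) * b + nu + delta) + delta * I s) * I s + c * e\<^sup>2 \<le> 0"
        using I_deriv_le[OF assms(1), of s] s unfolding c_def by (simp add: algebra_simps)
    qed simp
    moreover have "c * e\<^sup>2 * T = 2" unfolding T_def using \<open>0 < c\<close> \<open>0 < e\<close> by simp
    ultimately have "I T \<le> I 0 - 2" by simp
    thus False using I_le_1[of 0] I_nonneg[OF \<open>0 \<le> T\<close>] by simp
  qed
  hence "I t < e" if "T \<le> t" for t using I_antimono[OF assms(1) \<open>0 \<le> T\<close> that] by linarith
  thus ?thesis using \<open>0 \<le> T\<close> by blast
qed

lemma I_tendsto_0:
  assumes "beta \<le> (1 - p) * b + nu + delta"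
  shows "(I \<longlongrightarrow> 0) at_top"
proof (rule order_tendstoI)
  fix e :: real assume "e < 0"
  thus "\<forall>\<^sub>F t in at_top. e < I t"
    using I_nonneg by (auto simp: eventually_at_top_linorder intro!: exI[of _ 0] less_le_trans[of e 0])
next
  fix e :: real assume "0 < e"
  thus "\<forall>\<^sub>F t in at_top. I t < e"
    using I_eventually_less[OF assms] unfolding eventually_at_top_linorder by blast
qed

lemma R_le:
  assumes "0 \<le> t0" "t0 \<le> t" "0 < k" and I_le: "\<And>s. t0 \<le> s \<Longrightarrow> I s \<le> e"
    and "k \<le> b + alpha - delta * e"
  shows "R t \<le> nu * e / k + R t0 * exp (- k * (t - t0))"
proof -
  define A where "A = nu * e / k"
  have "0 \<le> e" using I_le[OF order_refl] I_nonneg[OF \<open>0 \<le> t0\<close>] by linarith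
  hence "0 \<le> A" unfolding A_def using params \<open>0 < k\<close> by simp
  define v where "v s = (R s - A) * exp (k * s)" for s
  have "v t \<le> v t0"
  proof (rule DERIV_nonpos_imp_decreasing_on_halfline[OF _ _ assms(1,2)])
    show "continuous_on {0..} v" unfolding v_def by (intro continuous_intros continuous_on_R)
    fix s :: real assume "0 < s"
    thus "(v has_real_derivative (nu * I s - (b + alpha - delta * I s) * R s + k * (R s - A)) * exp (k * s)) (at s)"
      unfolding v_def by (auto intro!: derivative_eq_intros deriv_R simp: algebra_simps)
  next
    fix s assume s: "t0 < s" "s < t"
    have "I s \<le> e" "0 \<le> R s" using I_le R_nonneg s assms by auto
    hence "nu * I s \<le> nu * e" "delta * I s \<le> delta * e" using params by (auto intro: mult_left_mono)
    hence "nu * I s \<le> nu * e" "k * R s \<le> (b + alpha - delta * I s) * R s"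
      using assms(5) \<open>0 \<le> R s\<close> by (auto intro!: mult_right_mono)
    hence "nu * I s - (b + alpha - delta * I s) * R s + k * (R s - A) \<le> 0"
      unfolding A_def using \<open>0 < k\<close> by (simp add: algebra_simps)
    thus "(nu * I s - (b + alpha - delta * I s) * R s + k * (R s - A)) * exp (k * s) \<le> 0"
      by (simp add: mult_nonpos_nonneg)
  qed
  hence "R t - A \<le> (R t0 - A) * exp (- k * (t - t0))"
    unfolding v_def by (simp add: algebra_simps exp_diff exp_minus field_simps)
  also have "\<dots> \<le> R t0 * exp (- k * (t - t0))" using \<open>0 \<le> A\<close> by (simp add: algebra_simps)
  finally show ?thesis unfolding A_def by simp
qed

lemma R_eventually_le:
  assumes "beta \<le> (1 - p) * b + nu + delta" "0 < e" "0 < k" "k \<le> b + alpha - delta * e"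
  shows "\<exists>T. \<forall>\<^sub>F t in at_top. R t \<le> nu * e / k + exp (- k * (t - T))"
proof -
  obtain T where "0 \<le> T" and I_less: "\<And>t. T \<le> t \<Longrightarrow> I t < e"
    using I_eventually_less[OF assms(1,2)] by blast
  have "R t \<le> nu * e / k + exp (- k * (t - T))" if "T \<le> t" for t
  proof -
    have "R t \<le> nu * e / k + R T * exp (- k * (t - T))"
      using \<open>0 \<le> T\<close> that assms(3,4) I_less by (intro R_le) (auto intro: less_imp_le)
    moreover have "R T * exp (- k * (t - T)) \<le> exp (- k * (t - T))"
      using R_nonneg[OF \<open>0 \<le> T\<close>] R_le_1[OF \<open>0 \<le> T\<close>] by (intro mult_left_le_one_le) auto
    ultimately show ?thesis by linarith
  qed
  thus ?thesis unfolding eventually_at_top_linorder by blast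
qed

lemma R_tendsto_0:
  assumes "beta \<le> (1 - p) * b + nu + delta"
  shows "(R \<longlongrightarrow> 0) at_top"
proof (rule order_tendstoI)
  fix \<epsilon> :: real assume "\<epsilon> < 0"
  thus "\<forall>\<^sub>F t in at_top. \<epsilon> < R t"
    using R_nonneg by (auto simp: eventually_at_top_linorder intro!: exI[of _ 0] less_le_trans[of \<epsilon> 0])
next
  fix \<epsilon> :: real assume "0 < \<epsilon>"
  define k where "k = (b + alpha) / 2"
  have "0 < k" unfolding k_def using params by simp
  define e where "e = min (k / (delta + 1)) (\<epsilon> * k / (nu + 1))"
  have "0 < e" unfolding e_def using \<open>0 < k\<close> \<open>0 < \<epsilon>\<close> params by simp
  have "delta * e \<le> delta * (k / (delta + 1))" unfolding e_def using params by (intro mult_left_mono) auto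
  also have "\<dots> \<le> k" using params \<open>0 < k\<close> by (simp add: field_simps)
  finally have "k \<le> b + alpha - delta * e" unfolding k_def by simp
  then obtain T where "\<forall>\<^sub>F t in at_top. R t \<le> nu * e / k + exp (- k * (t - T))"
    using R_eventually_le[OF assms \<open>0 < e\<close> \<open>0 < k\<close>] by blast
  moreover have "nu * e / k < \<epsilon>"
  proof -
    have "nu * e \<le> nu * (\<epsilon> * k / (nu + 1))" unfolding e_def using params by (intro mult_left_mono) auto
    also have "\<dots> < \<epsilon> * k" using params \<open>0 < k\<close> \<open>0 < \<epsilon>\<close> by (simp add: field_simps)
    finally show ?thesis using \<open>0 < k\<close> by (simp add: field_simps)
  qed
  hence "\<forall>\<^sub>F t in at_top. nu * e / k + exp (- k * (t - T)) < \<epsilon>"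
    by (intro order_tendstoD(2)[OF tendsto_add[OF tendsto_const exp_decay_tendsto_0[OF \<open>0 < k\<close>]]]) simp
  ultimately show "\<forall>\<^sub>F t in at_top. R t < \<epsilon>" by eventually_elim simp
qed

lemma I_plus_R_le:
  assumes "beta \<le> (1 - p) * b + nu + delta" "0 \<le> t" "0 < k" "k \<le> b + alpha - delta * I 0"
  shows "I t + R t \<le> (1 + nu / k) * I 0 + R 0"
proof -
  have "R t \<le> nu * I 0 / k + R 0 * exp (- k * (t - 0))"
    using I_antimono[OF assms(1)] assms(2-4) by (intro R_le) auto
  moreover have "R 0 * exp (- k * (t - 0)) \<le> R 0"
    using R_nonneg[of 0] assms(2,3) by (intro mult_left_le) auto
  moreover have "I t \<le> I 0" using I_antimono[OF assms(1) order_refl assms(2)] .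
  ultimately show ?thesis by (simp add: distrib_right)
qed

lemma infection_factor_ge_near_E0:
  assumes "(1 - p) * b + nu + delta < beta" "0 \<le> s"
    and near: "dist (x s) (1, 0, 0) < (beta - ((1 - p) * b + nu + delta)) / (4 * beta)"
  shows "(beta - ((1 - p) * b + nu + delta)) / 2 \<le> beta * S s - ((1 - p) * b + nu + delta) + delta * I s"
proof -
  define gamma where "gamma = (1 - p) * b + nu + delta"
  have "0 \<le> gamma" "gamma < beta" unfolding gamma_def using params assms(1) by auto
  define \<epsilon> where "\<epsilon> = (beta - gamma) / (4 * beta)"
  have "I s < \<epsilon>" "R s < \<epsilon>"
    using dist_E0_ge[where S = "S s" and I = "I s" and R = "R s"] near unfolding components gamma_def \<epsilon>_def
    by auto
  hence "beta * (I s + R s) \<le> beta * (2 * \<epsilon>)"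
    using \<open>gamma < beta\<close> \<open>0 \<le> gamma\<close> by (intro mult_left_mono) auto
  also have "\<dots> = (beta - gamma) / 2" unfolding \<epsilon>_def using \<open>0 \<le> gamma\<close> \<open>gamma < beta\<close> by simp
  moreover have "beta * S s = beta - beta * (I s + R s)"
  proof -
    have "S s = 1 - (I s + R s)" using total_eq_1[OF \<open>0 \<le> s\<close>] by linarith
    thus ?thesis by (simp add: right_diff_distrib)
  qed
  moreover have "0 \<le> delta * I s" using I_nonneg[OF \<open>0 \<le> s\<close>] params by simp
  ultimately have "(beta - gamma) / 2 \<le> beta * S s - gamma + delta * I s"
    unfolding diff_divide_distrib by linarith
  thus ?thesis unfolding gamma_def .
qed

lemma I_exp_growth:
  assumes "0 \<le> t"
    and growth: "\<And>s. 0 \<le> s \<Longrightarrow> s \<le> t \<Longrightarrow> c \<le> beta * S s - ((1 - p) * b + nu + delta) + delta * I s"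
  shows "I 0 * exp (c * t) \<le> I t"
proof -
  define v where "v s = - (I s * exp (- c * s))" for s
  have "v t \<le> v 0"
  proof (rule DERIV_nonpos_imp_decreasing_on_halfline[OF _ _ order_refl assms(1)])
    show "continuous_on {0..} v" unfolding v_def by (intro continuous_intros continuous_on_I)
    fix s :: real assume "0 < s"
    thus "(v has_real_derivative
        - ((beta * S s - ((1 - p) * b + nu + delta) + delta * I s - c) * I s * exp (- c * s))) (at s)"
      unfolding v_def by (auto intro!: derivative_eq_intros deriv_I simp: algebra_simps)
  next
    fix s assume "0 < s" "s < t"
    hence "0 \<le> (beta * S s - ((1 - p) * b + nu + delta) + delta * I s - c) * I s * exp (- c * s)"
      using growth[of s] I_nonneg[of s] by (intro mult_nonneg_nonneg) auto
    thus "- ((beta * S s - ((1 - p) * b + nu + delta) + delta * I s - c) * I s * exp (- c * s)) \<le> 0"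
      by simp
  qed
  hence "I 0 * exp (c * t) \<le> I t * exp (- c * t) * exp (c * t)" unfolding v_def by simp
  also have "\<dots> = I t" by (simp add: exp_minus field_simps)
  finally show ?thesis .
qed

end

lemma sirs_E0_stable:
  assumes params: "0 < b" "0 \<le> nu" "0 \<le> delta" "0 \<le> alpha" "0 \<le> p" "p < 1"
    and R0_le: "beta \<le> (1 - p) * b + nu + delta"
  shows "lyapunov_stable_in (sirs_field b beta nu delta alpha p) D_fra (1, 0, 0)"
  unfolding lyapunov_stable_in_def
proof (intro allI impI)
  fix \<epsilon> :: real assume "0 < \<epsilon>"
  define k where "k = (b + alpha) / 2"
  have "0 < k" unfolding k_def using params by simp
  define q where "q = 2 + nu / k"
  have "0 < q" unfolding q_def using \<open>0 < k\<close> params by (simp add: add_pos_nonneg)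
  define \<eta> where "\<eta> = min (k / (delta + 1)) (\<epsilon> / (2 * q))"
  have "0 < \<eta>" unfolding \<eta>_def using \<open>0 < k\<close> \<open>0 < \<epsilon>\<close> \<open>0 < q\<close> params by simp
  have "\<eta> \<le> \<epsilon> / (2 * q)" unfolding \<eta>_def by simp
  hence "2 * (q * \<eta>) \<le> \<epsilon>" using \<open>0 < q\<close> by (simp add: field_simps)
  have "delta * \<eta> \<le> delta * (k / (delta + 1))" unfolding \<eta>_def using params by (intro mult_left_mono) auto
  also have "\<dots> \<le> k" using params \<open>0 < k\<close> by (simp add: field_simps)
  finally have "delta * \<eta> \<le> k" .
  have "dist (x t) (1, 0, 0) < \<epsilon>"
    if sol: "is_solution (sirs_field b beta nu delta alpha p) x" "x 0 \<in> D_fra" "dist (x 0) (1, 0, 0) < \<eta>"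
      and "0 \<le> t" for x t
  proof -
    interpret sirs_solution b beta nu delta alpha p x "\<lambda>t. fst (x t)" "\<lambda>t. fst (snd (x t))" "\<lambda>t. snd (snd (x t))"
      using params sol by unfold_locales auto
    have I0: "fst (snd (x 0)) < \<eta>" and R0: "snd (snd (x 0)) < \<eta>"
      using dist_E0_ge[where S = "fst (x 0)" and I = "fst (snd (x 0))" and R = "snd (snd (x 0))"] sol(3) by auto
    have "delta * fst (snd (x 0)) \<le> delta * \<eta>" using I0 params by (simp add: mult_left_mono)
    hence "k \<le> b + alpha - delta * fst (snd (x 0))" using \<open>delta * \<eta> \<le> k\<close> unfolding k_def by simp
    hence "fst (snd (x t)) + snd (snd (x t)) \<le> (1 + nu / k) * fst (snd (x 0)) + snd (snd (x 0))"
      using R0_le \<open>0 \<le> t\<close> \<open>0 < k\<close> by (intro I_plus_R_le)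
    also have "\<dots> < (1 + nu / k) * \<eta> + \<eta>"
      using I0 R0 \<open>0 < k\<close> params by (intro add_le_less_mono mult_left_mono) auto
    also have "\<dots> = q * \<eta>" unfolding q_def by (simp add: algebra_simps)
    finally have "2 * (fst (snd (x t)) + snd (snd (x t))) < \<epsilon>" using \<open>2 * (q * \<eta>) \<le> \<epsilon>\<close> by simp
    moreover have "dist (x t) (1, 0, 0) \<le> 2 * (fst (snd (x t)) + snd (snd (x t)))"
      using dist_E0_le[of "fst (x t)" "fst (snd (x t))" "snd (snd (x t))"] in_D_fra[OF \<open>0 \<le> t\<close>] by simp
    ultimately show ?thesis by linarith
  qed
  thus "\<exists>\<eta>>0. \<forall>x. is_solution (sirs_field b beta nu delta alpha p) x \<and> x 0 \<in> D_fra \<and>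
      dist (x 0) (1, 0, 0) < \<eta> \<longrightarrow> (\<forall>t\<ge>0. dist (x t) (1, 0, 0) < \<epsilon>)"
    using \<open>0 < \<eta>\<close> by blast
qed

lemma sirs_E0_attracting:
  assumes params: "0 < b" "0 \<le> nu" "0 \<le> delta" "0 \<le> alpha" "0 \<le> p" "p < 1"
    and R0_le: "beta \<le> (1 - p) * b + nu + delta"
  shows "attracting_in (sirs_field b beta nu delta alpha p) D_fra (1, 0, 0)"
  unfolding attracting_in_def
proof (intro allI impI)
  fix x assume sol: "is_solution (sirs_field b beta nu delta alpha p) x \<and> x 0 \<in> D_fra"
  interpret sirs_solution b beta nu delta alpha p x "\<lambda>t. fst (x t)" "\<lambda>t. fst (snd (x t))" "\<lambda>t. snd (snd (x t))"
    using params sol by unfold_locales auto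
  have "((\<lambda>t. (1 - fst (snd (x t)) - snd (snd (x t)), fst (snd (x t)), snd (snd (x t)))) \<longlongrightarrow> (1 - 0 - 0, 0, 0)) at_top"
    by (intro tendsto_intros I_tendsto_0[OF R0_le] R_tendsto_0[OF R0_le])
  moreover have "\<forall>\<^sub>F t in at_top. (1 - fst (snd (x t)) - snd (snd (x t)), fst (snd (x t)), snd (snd (x t))) = x t"
    unfolding eventually_at_top_linorder using total_eq_1
    by (intro exI[of _ 0] allI impI) (auto simp: prod_eq_iff algebra_simps)
  ultimately show "(x \<longlongrightarrow> (1, 0, 0)) at_top" by (simp add: tendsto_cong)
qed

lemma sirs_E0_not_stable:
  assumes params: "0 < b" "0 \<le> nu" "0 \<le> delta" "0 \<le> alpha" "0 \<le> p" "p < 1"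
    and R0_gt: "(1 - p) * b + nu + delta < beta"
  shows "\<not> lyapunov_stable_in (sirs_field b beta nu delta alpha p) D_fra (1, 0, 0)"
proof
  define gamma where "gamma = (1 - p) * b + nu + delta"
  have "0 \<le> gamma" unfolding gamma_def using params by simp
  define c where "c = (beta - gamma) / 2"
  have "0 < c" unfolding c_def gamma_def using R0_gt by simp
  have "0 < (beta - gamma) / (4 * beta)" using R0_gt \<open>0 \<le> gamma\<close> unfolding gamma_def by simp
  assume "lyapunov_stable_in (sirs_field b beta nu delta alpha p) D_fra (1, 0, 0)"
  then obtain \<eta> where "0 < \<eta>" and stable: "\<And>x. is_solution (sirs_field b beta nu delta alpha p) x \<and>
      x 0 \<in> D_fra \<and> dist (x 0) (1, 0, 0) < \<eta> \<Longrightarrow> \<forall>t\<ge>0. dist (x t) (1, 0, 0) < (beta - gamma) / (4 * beta)"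
    unfolding lyapunov_stable_in_def using \<open>0 < (beta - gamma) / (4 * beta)\<close> by blast
  define h where "h = min (\<eta> / 3) (1 / 2)"
  have h: "0 < h" "h \<le> 1 / 2" "2 * h < \<eta>" unfolding h_def using \<open>0 < \<eta>\<close> by auto
  have x0: "(1 - h, h, 0) \<in> D_fra" unfolding D_fra_def using h by auto
  then obtain x where sol: "is_solution (sirs_field b beta nu delta alpha p) x" and "x 0 = (1 - h, h, 0)"
    using sirs_solution_exists[OF params(1,2,4,5,6)] by blast
  interpret sirs_solution b beta nu delta alpha p x "\<lambda>t. fst (x t)" "\<lambda>t. fst (snd (x t))" "\<lambda>t. snd (snd (x t))"
    using params sol x0 \<open>x 0 = (1 - h, h, 0)\<close> by unfold_locales auto
  have "dist (x 0) (1, 0, 0) < \<eta>" using dist_E0_le[OF x0] h \<open>x 0 = (1 - h, h, 0)\<close> by simp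
  hence growth: "c \<le> beta * fst (x s) - gamma + delta * fst (snd (x s))" if "0 \<le> s" for s
    using stable sol x0 that \<open>x 0 = (1 - h, h, 0)\<close> infection_factor_ge_near_E0[OF R0_gt that]
    unfolding c_def gamma_def by auto
  define T where "T = 1 / (h * c)"
  have "0 \<le> T" unfolding T_def using h \<open>0 < c\<close> by simp
  have "h + 1 = h * (1 + c * T)" unfolding T_def using h \<open>0 < c\<close> by (simp add: field_simps)
  also have "\<dots> \<le> h * exp (c * T)" using h by (intro mult_left_mono) (auto simp: exp_ge_add_one_self)
  also have "\<dots> \<le> fst (snd (x T))"
    using I_exp_growth[OF \<open>0 \<le> T\<close>, of c] growth \<open>x 0 = (1 - h, h, 0)\<close> unfolding gamma_def by auto
  also have "\<dots> \<le> 1" using I_le_1[OF \<open>0 \<le> T\<close>] .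
  finally show False using h by simp
qed

theorem theorem1:
  fixes b beta nu delta alpha p :: real
  assumes "b > 0" "beta > 0" "nu > 0" "delta > 0" "alpha > 0" "0 < p" "p < 1"
  defines "gamma \<equiv> (1 - p) * b + nu + delta"
  defines "R0 \<equiv> beta / gamma"
  shows "(GAS_in (sirs_field b beta nu delta alpha p) D_fra (1, 0, 0) \<longleftrightarrow> R0 \<le> 1)
       \<and> (R0 > 1 \<longrightarrow> \<not> lyapunov_stable_in (sirs_field b beta nu delta alpha p) D_fra (1, 0, 0))"
proof -
  have params: "0 < b" "0 \<le> nu" "0 \<le> delta" "0 \<le> alpha" "0 \<le> p" "p < 1" using assms by auto
  have "0 < gamma" unfolding gamma_def using assms by (simp add: add_pos_pos)
  hence "R0 \<le> 1 \<longleftrightarrow> beta \<le> gamma" unfolding R0_def by (simp add: divide_le_eq_1_pos)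
  moreover have "R0 > 1 \<longleftrightarrow> gamma < beta" unfolding R0_def using \<open>0 < gamma\<close> by (simp add: less_divide_eq_1_pos)
  ultimately show ?thesis
    using sirs_E0_stable[OF params] sirs_E0_attracting[OF params] sirs_E0_not_stable[OF params]
    unfolding GAS_in_def gamma_def by (auto simp: not_le)
qed

end
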